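(* Let $\phi$ be a strictly convex norm on $\mathbf{R}^n$ of class $\mathcal{C}^2$ on $\mathbf{R}^n\setminus\{0\}$ and $K\subseteq\mathbf{R}^n$ closed. Then $r^\phi_K:N^\phi(K)\to(0,\infty]$ is upper semicontinuous. Moreover, $$N^\phi(K)=\{(\xi^\phi_K(x),\nu^\phi_K(x)):x\in\mathbf{R}^n\setminus(K\cup\mathrm{Cut}^\phi(K))\}$$ and $r^\phi_K(\xi^\phi_K(x),\nu^\phi_K(x))=\delta^\phi_K(x)\,\rho^\phi_K(x)$ for all $x\in\mathbf{R}^n\setminus(K\cup\mathrm{Cut}^\phi(K))$.
   Context: A norm $\phi$ is strictly convex if $\phi(a+b)=\phi(a)+\phi(b)$ implies $\phi(b)a=\phi(a)b$. For closed $K$: $\delta^\phi_K(x)=\inf\{\phi(y-x):y\in K\}$; $\xi^\phi_K(x)=K\cap\{w:\phi(x-w)=\delta^\phi_K(x)\}$ (a singleton, identified with its element, for $x\notin K\cup\mathrm{Cut}^\phi(K)$); $\nu^\phi_K(x)=\delta^\phi_K(x)^{-1}(x-\xi^\phi_K(x))$ for $x\notin K$; $\rho^\phi_K(x)=\sup\bigl(\mathbf{R}\cap\{s:\delta^\phi_K(a+s(x-a))=s\,\delta^\phi_K(x)\}\bigr)$ for any $a\in\xi^\phi_K(x)$; $N^\phi(K)=\{(a,\eta)\in\mathbf{R}^n\times\mathbf{R}^n:a\in K,\ \phi(\eta)=1,\ \delta^\phi_K(a+s\eta)=s\text{ for some }s>0\}$; $r^\phi_K(a,\eta)=\sup\{s>0:\delta^\phi_K(a+s\eta)=s\}$;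 $\mathrm{Cut}^\phi(K)=\{a+r^\phi_K(a,\eta)\eta:(a,\eta)\in N^\phi(K),\ r^\phi_K(a,\eta)<\infty\}$. Upper semicontinuity refers to the topology of $N^\phi(K)\subseteq\mathbf{R}^{2n}$. *)

theory Defs
  imports "HOL-Analysis.Analysis"
begin

definition is_norm :: "('a::euclidean_space \<Rightarrow> real) \<Rightarrow> bool" where
  "is_norm \<phi> \<longleftrightarrow> (\<forall>x. \<phi> x = 0 \<longleftrightarrow> x = 0) \<and> (\<forall>t x. \<phi> (t *\<^sub>R x) = \<bar>t\<bar> * \<phi> x)
     \<and> (\<forall>x y. \<phi> (x + y) \<le> \<phi> x + \<phi> y)"

definition strictly_convex_norm :: "('a::euclidean_space \<Rightarrow> real) \<Rightarrow> bool" where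
  "strictly_convex_norm \<phi> \<longleftrightarrow> is_norm \<phi> \<and>
     (\<forall>a b. \<phi> (a + b) = \<phi> a + \<phi> b \<longrightarrow> \<phi> b *\<^sub>R a = \<phi> a *\<^sub>R b)"

definition C2_on :: "'a::euclidean_space set \<Rightarrow> ('a \<Rightarrow> real) \<Rightarrow> bool" where
  "C2_on S f \<longleftrightarrow> (\<exists>D1 :: 'a \<Rightarrow> ('a \<Rightarrow>\<^sub>L real). \<exists>D2 :: 'a \<Rightarrow> ('a \<Rightarrow>\<^sub>L ('a \<Rightarrow>\<^sub>L real)).
     (\<forall>x\<in>S. (f has_derivative blinfun_apply (D1 x)) (at x)) \<and>
     (\<forall>x\<in>S. (D1 has_derivative blinfun_apply (D2 x)) (at x)) \<and>
     continuous_on S D2)"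

definition dist_phi :: "('a::euclidean_space \<Rightarrow> real) \<Rightarrow> 'a set \<Rightarrow> 'a \<Rightarrow> real" where
  "dist_phi \<phi> K x = Inf ((\<lambda>y. \<phi> (y - x)) ` K)"

definition xi_set :: "('a::euclidean_space \<Rightarrow> real) \<Rightarrow> 'a set \<Rightarrow> 'a \<Rightarrow> 'a set" where
  "xi_set \<phi> K x = K \<inter> {w. \<phi> (x - w) = dist_phi \<phi> K x}"

text \<open>The nearest point, when \<open>xi_set\<close> is a singleton.\<close>
definition xi_pt :: "('a::euclidean_space \<Rightarrow> real) \<Rightarrow> 'a set \<Rightarrow> 'a \<Rightarrow> 'a" where
  "xi_pt \<phi> K x = the_elem (xi_set \<phi> K x)"

definition nu_phi :: "('a::euclidean_space \<Rightarrow> real) \<Rightarrow> 'a set \<Rightarrow> 'a \<Rightarrow> 'a" where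
  "nu_phi \<phi> K x = (1 / dist_phi \<phi> K x) *\<^sub>R (x - xi_pt \<phi> K x)"

definition rho_phi :: "('a::euclidean_space \<Rightarrow> real) \<Rightarrow> 'a set \<Rightarrow> 'a \<Rightarrow> ereal" where
  "rho_phi \<phi> K x = (let a = xi_pt \<phi> K x in
     Sup (ereal ` {s. dist_phi \<phi> K (a + s *\<^sub>R (x - a)) = s * dist_phi \<phi> K x}))"

definition normal_bundle :: "('a::euclidean_space \<Rightarrow> real) \<Rightarrow> 'a set \<Rightarrow> ('a \<times> 'a) set" where
  "normal_bundle \<phi> K = {(a, \<eta>). a \<in> K \<and> \<phi> \<eta> = 1 \<and> (\<exists>s>0. dist_phi \<phi> K (a + s *\<^sub>R \<eta>) = s)}"

definition reach_phi :: "('a::euclidean_space \<Rightarrow> real) \<Rightarrow> 'a set \<Rightarrow> 'a \<times> 'a \<Rightarrow> ereal" where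
  "reach_phi \<phi> K p = (case p of (a, \<eta>) \<Rightarrow>
     Sup (ereal ` {s. s > 0 \<and> dist_phi \<phi> K (a + s *\<^sub>R \<eta>) = s}))"

definition cut_phi :: "('a::euclidean_space \<Rightarrow> real) \<Rightarrow> 'a set \<Rightarrow> 'a set" where
  "cut_phi \<phi> K = {a + real_of_ereal (reach_phi \<phi> K (a, \<eta>)) *\<^sub>R \<eta> | a \<eta>.
     (a, \<eta>) \<in> normal_bundle \<phi> K \<and> reach_phi \<phi> K (a, \<eta>) < \<infinity>}"

definition usc_on :: "'b::topological_space set \<Rightarrow> ('b \<Rightarrow> ereal) \<Rightarrow> bool" where
  "usc_on S f \<longleftrightarrow> (\<forall>p\<in>S. \<forall>c. f p < c \<longrightarrow> (\<forall>\<^sub>F q in at p within S. f q < c))"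

end

theory Submission
  imports Defs
begin

text \<open>Since \<open>\<delta>\<close> is 1-Lipschitz for \<open>\<phi>\<close>, a segment \<open>a + [0,s] \<eta>\<close> along which \<open>\<delta>\<close> grows
  at unit speed does so on every shorter segment. Hence \<open>r(a,\<eta>) < s\<close> is equivalent to
  \<open>\<delta>(a + s \<eta>) \<noteq> s\<close>, an open condition in \<open>(a,\<eta>)\<close> by continuity of \<open>\<delta>\<close>; this is upper
  semicontinuity. If \<open>x = a + t \<eta>\<close> lies strictly inside such a segment of length \<open>s\<close> and
  \<open>b\<close> is a nearest point of \<open>x\<close>, then \<open>\<phi>(y - x) + \<phi>(x - b) = \<phi>(y - b)\<close> for \<open>y = a + s \<eta>\<close>,
  and strict convexity forces \<open>b = a\<close>. So the points of \<open>N(K)\<close> are exactly the pairs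
  (nearest point, unit direction) of points not in \<open>K \<union> Cut(K)\<close>, and the formula for
  the reach is the rescaling \<open>s \<mapsto> \<delta>(x) s\<close> of the parameter along the segment.\<close>

lemma is_norm_scaleR: "is_norm \<phi> \<Longrightarrow> \<phi> (t *\<^sub>R x) = \<bar>t\<bar> * \<phi> x"
  by (simp add: is_norm_def)

lemma is_norm_eq_0_iff: "is_norm \<phi> \<Longrightarrow> \<phi> x = 0 \<longleftrightarrow> x = 0"
  by (simp add: is_norm_def)

lemma is_norm_zero: "is_norm \<phi> \<Longrightarrow> \<phi> 0 = 0"
  by (simp add: is_norm_def)

lemma is_norm_triangle: "is_norm \<phi> \<Longrightarrow> \<phi> (x + y) \<le> \<phi> x + \<phi> y"
  by (simp add: is_norm_def)

lemma is_norm_minus: "is_norm \<phi> \<Longrightarrow> \<phi> (- x) = \<phi> x"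
  using is_norm_scaleR[of \<phi> "-1" x] by simp

lemma is_norm_minus_commute: "is_norm \<phi> \<Longrightarrow> \<phi> (x - y) = \<phi> (y - x)"
  using is_norm_minus[of \<phi> "x - y"] by simp

lemma is_norm_nonneg: "is_norm \<phi> \<Longrightarrow> 0 \<le> \<phi> x"
  using is_norm_triangle[of \<phi> x "- x"] is_norm_minus[of \<phi> x] is_norm_zero[of \<phi>] by simp

lemma is_norm_triangle_diff: "is_norm \<phi> \<Longrightarrow> \<phi> (x - z) \<le> \<phi> (x - y) + \<phi> (y - z)"
  using is_norm_triangle[of \<phi> "x - y" "y - z"] by simp

lemma is_norm_abs_diff_le: "is_norm \<phi> \<Longrightarrow> \<bar>\<phi> x - \<phi> y\<bar> \<le> \<phi> (x - y)"
  using is_norm_triangle_diff[of \<phi> x 0 y] is_norm_triangle_diff[of \<phi> y 0 x]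
    is_norm_minus_commute[of \<phi> x y]
  by simp

lemma is_norm_sum: "is_norm \<phi> \<Longrightarrow> \<phi> (sum f S) \<le> (\<Sum>i\<in>S. \<phi> (f i))"
  by (induction S rule: infinite_finite_induct)
    (auto simp: is_norm_zero intro: order_trans[OF is_norm_triangle])

lemma is_norm_le_norm:
  assumes "is_norm \<phi>"
  obtains C where "C \<ge> 0" "\<And>x. \<phi> x \<le> C * norm x"
proof
  show "0 \<le> (\<Sum>b\<in>Basis. \<phi> b)"
    by (simp add: assms is_norm_nonneg sum_nonneg)
  fix x :: 'a
  have "\<phi> x = \<phi> (\<Sum>b\<in>Basis. (x \<bullet> b) *\<^sub>R b)"
    by (simp add: euclidean_representation)
  also have "\<dots> \<le> (\<Sum>b\<in>Basis. \<phi> ((x \<bullet> b) *\<^sub>R b))"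
    by (rule is_norm_sum[OF assms])
  also have "\<dots> = (\<Sum>b\<in>Basis. \<bar>x \<bullet> b\<bar> * \<phi> b)"
    by (simp add: is_norm_scaleR[OF assms])
  also have "\<dots> \<le> (\<Sum>b\<in>Basis. norm x * \<phi> b)"
    by (intro sum_mono mult_right_mono) (auto simp: Basis_le_norm is_norm_nonneg[OF assms])
  finally show "\<phi> x \<le> (\<Sum>b\<in>Basis. \<phi> b) * norm x"
    by (simp add: sum_distrib_left mult.commute)
qed

lemma continuous_on_if_is_norm_Lipschitz:
  assumes "is_norm \<phi>" and "\<And>x y. \<bar>f x - f y\<bar> \<le> \<phi> (x - y)"
  shows "continuous_on S f"
proof -
  obtain C where "C \<ge> 0" "\<And>x. \<phi> x \<le> C * norm x"
    using is_norm_le_norm[OF assms(1)] by blast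
  then have "C-lipschitz_on S f"
    by (intro lipschitz_onI) (auto simp: dist_real_def dist_norm intro: order_trans[OF assms(2)])
  then show ?thesis
    by (rule lipschitz_on_continuous_on)
qed

lemma is_norm_continuous_on: "is_norm \<phi> \<Longrightarrow> continuous_on S \<phi>"
  by (rule continuous_on_if_is_norm_Lipschitz) (auto intro: is_norm_abs_diff_le)

lemma is_norm_ge_norm:
  fixes \<phi> :: "'a::euclidean_space \<Rightarrow> real"
  assumes "is_norm \<phi>"
  obtains m where "m > 0" "\<And>x. m * norm x \<le> \<phi> x"
proof -
  obtain b :: 'a where "b \<in> Basis"
    using nonempty_Basis by blast
  then have "sphere (0::'a) 1 \<noteq> {}"
    by (auto simp: norm_Basis)
  then obtain z where z: "z \<in> sphere 0 1" "\<And>y. y \<in> sphere 0 1 \<Longrightarrow> \<phi> z \<le> \<phi> y"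
    using continuous_attains_inf[OF compact_sphere _ is_norm_continuous_on[OF assms]] by blast
  have "\<phi> z > 0"
    using z(1) is_norm_eq_0_iff[OF assms, of z] is_norm_nonneg[OF assms, of z] by auto
  moreover have "\<phi> z * norm x \<le> \<phi> x" for x
  proof (cases "x = 0")
    case False
    then have "\<phi> z \<le> \<phi> ((1 / norm x) *\<^sub>R x)"
      using z(2)[of "(1 / norm x) *\<^sub>R x"] by simp
    with False show ?thesis
      by (simp add: is_norm_scaleR[OF assms] field_simps)
  qed (simp add: is_norm_zero[OF assms])
  ultimately show ?thesis
    using that by blast
qed

locale phi_distance =
  fixes \<phi> :: "'a::euclidean_space \<Rightarrow> real" and K :: "'a set"
  assumes norm_phi: "is_norm \<phi>" and closed_K: "closed K" and K_nonempty: "K \<noteq> {}"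
begin

abbreviation "\<delta> \<equiv> dist_phi \<phi> K"

lemma dist_phi_le: "y \<in> K \<Longrightarrow> \<delta> x \<le> \<phi> (y - x)"
  unfolding dist_phi_def
  by (rule cInf_lower) (auto intro: bdd_belowI[of _ 0] simp: is_norm_nonneg[OF norm_phi])

lemma dist_phi_nonneg: "0 \<le> \<delta> x"
  unfolding dist_phi_def using K_nonempty
  by (intro cInf_greatest) (auto simp: is_norm_nonneg[OF norm_phi])

lemma dist_phi_attained: "\<exists>y\<in>K. \<phi> (y - x) = \<delta> x"
proof -
  obtain y0 where y0: "y0 \<in> K"
    using K_nonempty by blast
  obtain m where m: "m > 0" "\<And>x. m * norm x \<le> \<phi> x"
    using is_norm_ge_norm[OF norm_phi] by blast
  define S where "S = K \<inter> cball x (\<phi> (y0 - x) / m)"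
  have y0S: "y0 \<in> S"
    using m(2)[of "y0 - x"] m(1) y0 by (auto simp: S_def field_simps dist_norm norm_minus_commute)
  have "continuous_on S (\<lambda>y. \<phi> (y - x))"
    by (intro continuous_on_compose2[OF is_norm_continuous_on[OF norm_phi]] continuous_intros) auto
  moreover have "compact S"
    unfolding S_def using closed_K by (intro closed_Int_compact) auto
  ultimately obtain z where z: "z \<in> S" "\<And>y. y \<in> S \<Longrightarrow> \<phi> (z - x) \<le> \<phi> (y - x)"
    using continuous_attains_inf[of S "\<lambda>y. \<phi> (y - x)"] y0S by blast
  have "\<phi> (z - x) \<le> \<phi> (y - x)" if "y \<in> K" for y
  proof (cases "y \<in> S")
    case False
    with that have "\<phi> (y0 - x) / m < norm (y - x)"
      by (simp add: S_def dist_norm norm_minus_commute)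
    then have "\<phi> (y0 - x) < m * norm (y - x)"
      using m(1) by (simp add: field_simps)
    then show ?thesis
      using z(2)[OF y0S] m(2)[of "y - x"] by simp
  qed (use z(2) in blast)
  then have "\<delta> x = \<phi> (z - x)"
    unfolding dist_phi_def using z(1) by (intro cInf_eq_minimum) (auto simp: S_def)
  then show ?thesis
    using z(1) by (auto simp: S_def)
qed

lemma dist_phi_le_plus: "\<delta> x \<le> \<delta> y + \<phi> (x - y)"
proof -
  obtain z where z: "z \<in> K" "\<phi> (z - y) = \<delta> y"
    using dist_phi_attained by blast
  have "\<delta> x \<le> \<phi> (z - y) + \<phi> (y - x)"
    using dist_phi_le[OF z(1), of x] is_norm_triangle_diff[OF norm_phi, of z x y] by linarith
  then show ?thesis
    using z(2) is_norm_minus_commute[OF norm_phi, of x y] by simp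
qed

lemma isCont_dist_phi: "isCont \<delta> x"
proof -
  have "continuous_on UNIV \<delta>"
    using dist_phi_le_plus is_norm_minus_commute[OF norm_phi]
    by (intro continuous_on_if_is_norm_Lipschitz[OF norm_phi]) (smt (verit))
  then show ?thesis
    by (simp add: continuous_on_eq_continuous_at)
qed

lemma dist_phi_eq_0_iff: "\<delta> x = 0 \<longleftrightarrow> x \<in> K"
proof
  assume "\<delta> x = 0"
  then show "x \<in> K"
    using dist_phi_attained[of x] is_norm_eq_0_iff[OF norm_phi] by auto
next
  assume "x \<in> K"
  then show "\<delta> x = 0"
    using dist_phi_le[of x x] dist_phi_nonneg[of x] by (simp add: is_norm_zero[OF norm_phi])
qed

lemma dist_phi_ray_le: "a \<in> K \<Longrightarrow> \<phi> \<eta> = 1 \<Longrightarrow> 0 \<le> t \<Longrightarrow> \<delta> (a + t *\<^sub>R \<eta>) \<le> t"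
  using dist_phi_le[of a "a + t *\<^sub>R \<eta>"] is_norm_minus[OF norm_phi, of "t *\<^sub>R \<eta>"]
  by (simp add: is_norm_scaleR[OF norm_phi])

lemma dist_phi_ray_shorten:
  assumes "a \<in> K" "\<phi> \<eta> = 1" "0 \<le> t" "t \<le> s" "\<delta> (a + s *\<^sub>R \<eta>) = s"
  shows "\<delta> (a + t *\<^sub>R \<eta>) = t"
proof -
  have "(a + s *\<^sub>R \<eta>) - (a + t *\<^sub>R \<eta>) = (s - t) *\<^sub>R \<eta>"
    by (simp add: algebra_simps)
  then have "s \<le> \<delta> (a + t *\<^sub>R \<eta>) + (s - t)"
    using dist_phi_le_plus[of "a + s *\<^sub>R \<eta>" "a + t *\<^sub>R \<eta>"] assms
    by (simp add: is_norm_scaleR[OF norm_phi])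
  then show ?thesis
    using dist_phi_ray_le[OF assms(1-3)] by simp
qed

definition normal_lengths :: "'a \<Rightarrow> 'a \<Rightarrow> real set" where
  "normal_lengths a \<eta> = {s. 0 < s \<and> \<delta> (a + s *\<^sub>R \<eta>) = s}"

lemma reach_phi_eq_Sup: "reach_phi \<phi> K (a, \<eta>) = Sup (ereal ` normal_lengths a \<eta>)"
  by (simp add: reach_phi_def normal_lengths_def)

lemma normal_lengths_le_reach_phi: "s \<in> normal_lengths a \<eta> \<Longrightarrow> ereal s \<le> reach_phi \<phi> K (a, \<eta>)"
  unfolding reach_phi_eq_Sup by (rule Sup_upper) simp

lemma normal_bundle_iff: "(a, \<eta>) \<in> normal_bundle \<phi> K \<longleftrightarrow>
    a \<in> K \<and> \<phi> \<eta> = 1 \<and> normal_lengths a \<eta> \<noteq> {}"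
  by (auto simp: normal_bundle_def normal_lengths_def)

lemma rho_set_scaled_eq_normal_lengths:
  assumes "a \<in> K" "d > 0"
  shows "(*) d ` {s. \<delta> (a + s *\<^sub>R (d *\<^sub>R \<eta>)) = s * d} = insert 0 (normal_lengths a \<eta>)"
proof (intro equalityI subsetI)
  fix r
  assume "r \<in> (*) d ` {s. \<delta> (a + s *\<^sub>R (d *\<^sub>R \<eta>)) = s * d}"
  then have "\<delta> (a + r *\<^sub>R \<eta>) = r"
    by (auto simp: mult.commute)
  then show "r \<in> insert 0 (normal_lengths a \<eta>)"
    using dist_phi_nonneg[of "a + r *\<^sub>R \<eta>"] by (auto simp: normal_lengths_def)
next
  fix r
  assume "r \<in> insert 0 (normal_lengths a \<eta>)"
  then have "r / d \<in> {s. \<delta> (a + s *\<^sub>R (d *\<^sub>R \<eta>)) = s * d}"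
    using assms dist_phi_eq_0_iff[of a] by (auto simp: normal_lengths_def)
  then show "r \<in> (*) d ` {s. \<delta> (a + s *\<^sub>R (d *\<^sub>R \<eta>)) = s * d}"
    using assms(2) by (intro image_eqI[of _ _ "r / d"]) auto
qed

lemma in_normal_lengths_below_reach_phi:
  assumes "a \<in> K" "\<phi> \<eta> = 1" "0 < u" "ereal u < reach_phi \<phi> K (a, \<eta>)"
  shows "u \<in> normal_lengths a \<eta>"
proof -
  obtain s where "s \<in> normal_lengths a \<eta>" "u < s"
    using assms(4) unfolding reach_phi_eq_Sup less_Sup_iff by auto
  then show ?thesis
    using dist_phi_ray_shorten[OF assms(1,2), of u s] assms(3) by (simp add: normal_lengths_def)
qed

lemma reach_phi_le_if_not_normal_length:
  assumes "a \<in> K" "\<phi> \<eta> = 1" "0 < s" "\<delta> (a + s *\<^sub>R \<eta>) \<noteq> s"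
  shows "reach_phi \<phi> K (a, \<eta>) \<le> ereal s"
  unfolding reach_phi_eq_Sup
proof (rule Sup_least, clarify)
  fix t
  assume "t \<in> normal_lengths a \<eta>"
  then show "ereal t \<le> ereal s"
    using dist_phi_ray_shorten[OF assms(1,2), of s t] assms(3,4)
    by (force simp: normal_lengths_def)
qed

lemma reach_phi_attained:
  assumes "(a, \<eta>) \<in> normal_bundle \<phi> K" and "reach_phi \<phi> K (a, \<eta>) < \<infinity>"
  obtains r where "r > 0" "reach_phi \<phi> K (a, \<eta>) = ereal r" "\<delta> (a + r *\<^sub>R \<eta>) = r"
proof -
  obtain s where a: "a \<in> K" "\<phi> \<eta> = 1" and s: "s \<in> normal_lengths a \<eta>"
    using assms(1) unfolding normal_bundle_iff by blast
  then obtain r where r: "reach_phi \<phi> K (a, \<eta>) = ereal r"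
    using assms(2) normal_lengths_le_reach_phi[OF s] by (cases "reach_phi \<phi> K (a, \<eta>)") auto
  have "r > 0"
    using normal_lengths_le_reach_phi[OF s] r s by (auto simp: normal_lengths_def)
  define D where "D = \<delta> (a + r *\<^sub>R \<eta>)"
  have "\<not> D < r"
  proof
    assume "D < r"
    define u where "u = (D + 3 * r) / 4"
    have u: "0 < u" "u < r"
      using \<open>D < r\<close> \<open>r > 0\<close> dist_phi_nonneg[of "a + r *\<^sub>R \<eta>"] by (auto simp: u_def D_def)
    then have "\<delta> (a + u *\<^sub>R \<eta>) = u"
      using in_normal_lengths_below_reach_phi[OF a u(1)] r by (simp add: normal_lengths_def)
    moreover have "(a + u *\<^sub>R \<eta>) - (a + r *\<^sub>R \<eta>) = (u - r) *\<^sub>R \<eta>"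
      by (simp add: algebra_simps)
    ultimately have "u \<le> D + (r - u)"
      using dist_phi_le_plus[of "a + u *\<^sub>R \<eta>" "a + r *\<^sub>R \<eta>"] u a(2)
      by (simp add: is_norm_scaleR[OF norm_phi] D_def)
    with \<open>D < r\<close> show False
      unfolding u_def by (simp add: field_simps)
  qed
  then have "D = r"
    using dist_phi_ray_le[OF a, of r] \<open>r > 0\<close> by (simp add: D_def)
  then show ?thesis
    using that \<open>r > 0\<close> r by (simp add: D_def)
qed

lemma usc_on_reach_phi: "usc_on (normal_bundle \<phi> K) (reach_phi \<phi> K)"
  unfolding usc_on_def
proof (intro ballI allI impI)
  fix p c
  assume p: "p \<in> normal_bundle \<phi> K" and "reach_phi \<phi> K p < c"
  obtain s where s: "reach_phi \<phi> K p < ereal s" "ereal s < c"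
    using ereal_dense2[OF \<open>reach_phi \<phi> K p < c\<close>] by blast
  obtain a \<eta> where p_eq: "p = (a, \<eta>)"
    by (cases p)
  obtain s1 where "s1 \<in> normal_lengths a \<eta>"
    using p unfolding p_eq normal_bundle_iff by blast
  then have "0 < s"
    using normal_lengths_le_reach_phi[of s1 a \<eta>] s(1)
    by (auto simp: p_eq normal_lengths_def dest: order.strict_trans1)
  have "\<delta> (fst p + s *\<^sub>R snd p) \<noteq> s"
    using normal_lengths_le_reach_phi[of s a \<eta>] s(1) \<open>0 < s\<close> by (auto simp: p_eq normal_lengths_def)
  moreover have "((\<lambda>q. \<delta> (fst q + s *\<^sub>R snd q)) \<longlongrightarrow> \<delta> (fst p + s *\<^sub>R snd p))
      (at p within normal_bundle \<phi> K)"
    by (intro isCont_tendsto_compose[OF isCont_dist_phi] tendsto_intros)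
  ultimately have "\<forall>\<^sub>F q in at p within normal_bundle \<phi> K.
      \<delta> (fst q + s *\<^sub>R snd q) \<noteq> s \<and> q \<in> normal_bundle \<phi> K"
    by (intro eventually_conj tendsto_imp_eventually_ne) (auto simp: eventually_at_filter)
  then show "\<forall>\<^sub>F q in at p within normal_bundle \<phi> K. reach_phi \<phi> K q < c"
  proof (rule eventually_mono)
    fix q
    assume q: "\<delta> (fst q + s *\<^sub>R snd q) \<noteq> s \<and> q \<in> normal_bundle \<phi> K"
    obtain b \<zeta> where q_eq: "q = (b, \<zeta>)"
      by (cases q)
    have "reach_phi \<phi> K q \<le> ereal s"
      using reach_phi_le_if_not_normal_length \<open>0 < s\<close> q by (simp add: q_eq normal_bundle_iff)
    with s(2) show "reach_phi \<phi> K q < c"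
      by simp
  qed
qed

end

locale strictly_convex_phi_distance = phi_distance +
  assumes strictly_convex: "strictly_convex_norm \<phi>"
begin

lemma xi_set_inside_normal_segment:
  assumes a: "a \<in> K" "\<phi> \<eta> = 1" and ts: "0 < t" "t < s" "\<delta> (a + s *\<^sub>R \<eta>) = s"
  shows "xi_set \<phi> K (a + t *\<^sub>R \<eta>) = {a}"
proof -
  define x where "x = a + t *\<^sub>R \<eta>"
  define y where "y = a + s *\<^sub>R \<eta>"
  have dx: "\<delta> x = t"
    unfolding x_def by (rule dist_phi_ray_shorten[of _ _ _ s]) (use a ts in auto)
  have yx: "y - x = (s - t) *\<^sub>R \<eta>"
    by (simp add: x_def y_def algebra_simps)
  then have \<phi>_yx: "\<phi> (y - x) = s - t"
    using ts a(2) by (simp add: is_norm_scaleR[OF norm_phi])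
  have "a \<in> xi_set \<phi> K x"
    using a ts dx by (simp add: xi_set_def x_def is_norm_scaleR[OF norm_phi])
  moreover have "b = a" if "b \<in> xi_set \<phi> K x" for b
  proof -
    have b: "b \<in> K" "\<phi> (x - b) = t"
      using that dx by (auto simp: xi_set_def)
    have "s \<le> \<phi> ((y - x) + (x - b))"
      using dist_phi_le[OF b(1), of y] ts(3) is_norm_minus_commute[OF norm_phi, of b y]
      by (simp add: y_def)
    then have "\<phi> ((y - x) + (x - b)) = \<phi> (y - x) + \<phi> (x - b)"
      using is_norm_triangle[OF norm_phi, of "y - x" "x - b"] \<phi>_yx b(2) by simp
    then have "t *\<^sub>R (y - x) = (s - t) *\<^sub>R (x - b)"
      using strictly_convex \<phi>_yx b(2) unfolding strictly_convex_norm_def by metis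
    then have "(s - t) *\<^sub>R (t *\<^sub>R \<eta>) = (s - t) *\<^sub>R (x - b)"
      by (simp add: yx mult.commute)
    then have "t *\<^sub>R \<eta> = x - b"
      using ts by (metis scaleR_cancel_left right_minus_eq less_irrefl)
    then show "b = a"
      by (simp add: x_def)
  qed
  ultimately show ?thesis
    unfolding x_def by blast
qed

lemma inside_normal_segment_not_cut:
  assumes a: "a \<in> K" "\<phi> \<eta> = 1" and ts: "0 < t" "t < s" "\<delta> (a + s *\<^sub>R \<eta>) = s"
  shows "a + t *\<^sub>R \<eta> \<notin> cut_phi \<phi> K"
proof
  assume "a + t *\<^sub>R \<eta> \<in> cut_phi \<phi> K"
  then obtain b \<zeta> where cut: "a + t *\<^sub>R \<eta> = b + real_of_ereal (reach_phi \<phi> K (b, \<zeta>)) *\<^sub>R \<zeta>"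
    and N: "(b, \<zeta>) \<in> normal_bundle \<phi> K" and fin: "reach_phi \<phi> K (b, \<zeta>) < \<infinity>"
    unfolding cut_phi_def by blast
  obtain r where r: "r > 0" "reach_phi \<phi> K (b, \<zeta>) = ereal r" "\<delta> (b + r *\<^sub>R \<zeta>) = r"
    using reach_phi_attained[OF N fin] .
  have b: "b \<in> K" "\<phi> \<zeta> = 1"
    using N by (simp_all add: normal_bundle_iff)
  have "\<delta> (a + t *\<^sub>R \<eta>) = t"
    by (rule dist_phi_ray_shorten[of _ _ _ s]) (use a ts in auto)
  then have "r = t"
    using cut r by simp
  then have "b \<in> xi_set \<phi> K (a + t *\<^sub>R \<eta>)"
    using cut r b by (simp add: xi_set_def is_norm_scaleR[OF norm_phi])
  then have "b = a" and "\<zeta> = \<eta>"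
    using xi_set_inside_normal_segment[OF a ts] cut r \<open>r = t\<close> ts(1) by auto
  then have "ereal s \<le> ereal r"
    using normal_lengths_le_reach_phi[of s a \<eta>] ts r by (simp add: normal_lengths_def)
  with \<open>r = t\<close> ts(2) show False
    by simp
qed

lemma xi_set_outside_cut:
  assumes x: "x \<notin> K" "x \<notin> cut_phi \<phi> K" and a: "a \<in> K" "\<phi> (x - a) = \<delta> x"
  shows "xi_set \<phi> K x = {a}"
proof -
  define d where "d = \<delta> x"
  define \<eta> where "\<eta> = (1 / d) *\<^sub>R (x - a)"
  have "d > 0"
    using dist_phi_eq_0_iff[of x] dist_phi_nonneg[of x] x(1) by (simp add: d_def)
  then have \<eta>: "\<phi> \<eta> = 1" and x_eq: "x = a + d *\<^sub>R \<eta>"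
    using a(2) by (simp_all add: \<eta>_def d_def is_norm_scaleR[OF norm_phi])
  then have d: "d \<in> normal_lengths a \<eta>"
    using \<open>d > 0\<close> by (simp add: normal_lengths_def d_def)
  have "\<exists>s\<in>normal_lengths a \<eta>. d < s"
  proof (rule ccontr)
    assume "\<not> ?thesis"
    then have "reach_phi \<phi> K (a, \<eta>) = ereal d"
      using normal_lengths_le_reach_phi[OF d] unfolding reach_phi_eq_Sup
      by (intro antisym Sup_least) auto
    then have "x \<in> cut_phi \<phi> K"
      unfolding cut_phi_def using a(1) \<eta> d x_eq
      by (intro CollectI exI[of _ a] exI[of _ \<eta>]) (auto simp: normal_bundle_iff)
    with x(2) show False
      by simp
  qed
  then obtain s where "d < s" "\<delta> (a + s *\<^sub>R \<eta>) = s"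
    by (auto simp: normal_lengths_def)
  then show ?thesis
    using xi_set_inside_normal_segment[OF a(1) \<eta> \<open>d > 0\<close>] x_eq by simp
qed

lemma xi_pt_nu_phi_outside_cut:
  assumes "x \<notin> K" "x \<notin> cut_phi \<phi> K"
  obtains a where "a \<in> K" "xi_pt \<phi> K x = a" "\<delta> x > 0" "\<phi> (x - a) = \<delta> x"
    "nu_phi \<phi> K x = (1 / \<delta> x) *\<^sub>R (x - a)"
proof -
  obtain a where a: "a \<in> K" "\<phi> (x - a) = \<delta> x"
    using dist_phi_attained[of x] is_norm_minus_commute[OF norm_phi] by metis
  then have "xi_pt \<phi> K x = a"
    using xi_set_outside_cut[OF assms a] by (simp add: xi_pt_def)
  moreover have "\<delta> x > 0"
    using dist_phi_eq_0_iff[of x] dist_phi_nonneg[of x] assms(1) by simp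
  ultimately show ?thesis
    using that a by (simp add: nu_phi_def)
qed

lemma normal_bundle_eq:
  "normal_bundle \<phi> K = {(xi_pt \<phi> K x, nu_phi \<phi> K x) | x. x \<notin> K \<union> cut_phi \<phi> K}"
proof (intro equalityI subsetI)
  fix p
  assume "p \<in> {(xi_pt \<phi> K x, nu_phi \<phi> K x) | x. x \<notin> K \<union> cut_phi \<phi> K}"
  then obtain x where p: "p = (xi_pt \<phi> K x, nu_phi \<phi> K x)" and x: "x \<notin> K" "x \<notin> cut_phi \<phi> K"
    by blast
  obtain a where "a \<in> K" "xi_pt \<phi> K x = a" "\<delta> x > 0" "\<phi> (x - a) = \<delta> x"
    "nu_phi \<phi> K x = (1 / \<delta> x) *\<^sub>R (x - a)"
    using xi_pt_nu_phi_outside_cut[OF x] .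
  then show "p \<in> normal_bundle \<phi> K"
    unfolding p normal_bundle_def
    by (auto simp: is_norm_scaleR[OF norm_phi] intro!: exI[of _ "\<delta> x"])
next
  fix p
  assume "p \<in> normal_bundle \<phi> K"
  moreover obtain a \<eta> where p: "p = (a, \<eta>)"
    by (cases p)
  ultimately obtain s where a: "a \<in> K" "\<phi> \<eta> = 1" and "s \<in> normal_lengths a \<eta>"
    by (auto simp: normal_bundle_iff)
  then have s: "0 < s" "\<delta> (a + s *\<^sub>R \<eta>) = s"
    by (simp_all add: normal_lengths_def)
  define x where "x = a + (s / 2) *\<^sub>R \<eta>"
  have "\<delta> x = s / 2"
    unfolding x_def by (rule dist_phi_ray_shorten[of _ _ _ s]) (use a s in auto)
  then have "x \<notin> K"
    using dist_phi_eq_0_iff[of x] s(1) by simp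
  moreover have "x \<notin> cut_phi \<phi> K"
    unfolding x_def by (rule inside_normal_segment_not_cut[of _ _ _ s]) (use a s in auto)
  moreover have "xi_pt \<phi> K x = a"
    unfolding x_def xi_pt_def using a s by (subst xi_set_inside_normal_segment[of _ _ _ s]) auto
  moreover have "nu_phi \<phi> K x = \<eta>"
    using calculation \<open>\<delta> x = s / 2\<close> s(1) by (simp add: nu_phi_def x_def)
  ultimately show "p \<in> {(xi_pt \<phi> K x, nu_phi \<phi> K x) | x. x \<notin> K \<union> cut_phi \<phi> K}"
    using p by blast
qed

lemma reach_phi_xi_pt_nu_phi:
  assumes x: "x \<notin> K" "x \<notin> cut_phi \<phi> K"
  shows "reach_phi \<phi> K (xi_pt \<phi> K x, nu_phi \<phi> K x) = ereal (\<delta> x) * rho_phi \<phi> K x"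
proof -
  obtain a where a: "a \<in> K" "xi_pt \<phi> K x = a" "\<delta> x > 0" "nu_phi \<phi> K x = (1 / \<delta> x) *\<^sub>R (x - a)"
    using xi_pt_nu_phi_outside_cut[OF x] by metis
  define \<eta> where "\<eta> = (1 / \<delta> x) *\<^sub>R (x - a)"
  define S where "S = {s. \<delta> (a + s *\<^sub>R (x - a)) = s * \<delta> x}"
  have pair: "(xi_pt \<phi> K x, nu_phi \<phi> K x) = (a, \<eta>)"
    by (simp add: a(2,4) \<eta>_def)
  have "x - a = \<delta> x *\<^sub>R \<eta>"
    using a(3) by (simp add: \<eta>_def)
  then have scaled: "(*) (\<delta> x) ` S = insert 0 (normal_lengths a \<eta>)"
    unfolding S_def by (simp only: rho_set_scaled_eq_normal_lengths[OF a(1,3)])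
  have "0 \<in> S"
    using a(1) dist_phi_eq_0_iff[of a] by (simp add: S_def)
  have "ereal (\<delta> x) * rho_phi \<phi> K x = ereal (\<delta> x) * (SUP s\<in>S. ereal s)"
    by (simp add: rho_phi_def a(2) S_def)
  also have "\<dots> = (SUP s\<in>S. ereal (\<delta> x * s))"
    using \<open>0 \<in> S\<close> a(3) by (subst Sup_ereal_mult_left') auto
  also have "\<dots> = Sup (ereal ` insert 0 (normal_lengths a \<eta>))"
    unfolding scaled[symmetric] by (simp add: image_image)
  also have "\<dots> = sup 0 (reach_phi \<phi> K (a, \<eta>))"
    by (simp add: reach_phi_eq_Sup zero_ereal_def[symmetric])
  also have "\<dots> = reach_phi \<phi> K (a, \<eta>)"
  proof (rule sup_absorb2)
    have "ereal (\<delta> x) \<le> reach_phi \<phi> K (a, \<eta>)"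
      using a(3) by (intro normal_lengths_le_reach_phi) (simp add: normal_lengths_def \<eta>_def)
    with a(3) show "0 \<le> reach_phi \<phi> K (a, \<eta>)"
      by (simp add: order_trans[rotated])
  qed
  finally show ?thesis
    unfolding pair by (rule sym)
qed

end

theorem lemma2p35:
  fixes \<phi> :: "'a::euclidean_space \<Rightarrow> real" and K :: "'a set"
  assumes "strictly_convex_norm \<phi>"
    and "C2_on (UNIV - {0}) \<phi>"
    and "closed K" and "K \<noteq> {}"
  shows "usc_on (normal_bundle \<phi> K) (reach_phi \<phi> K) \<and>
         normal_bundle \<phi> K =
           {(xi_pt \<phi> K x, nu_phi \<phi> K x) | x. x \<notin> K \<union> cut_phi \<phi> K} \<and>
         (\<forall>x. x \<notin> K \<union> cut_phi \<phi> K \<longrightarrow>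
           reach_phi \<phi> K (xi_pt \<phi> K x, nu_phi \<phi> K x) = ereal (dist_phi \<phi> K x) * rho_phi \<phi> K x)"
proof -
  interpret strictly_convex_phi_distance \<phi> K
    using assms by unfold_locales (auto simp: strictly_convex_norm_def)
  show ?thesis
    using usc_on_reach_phi normal_bundle_eq reach_phi_xi_pt_nu_phi by blast
qed

end
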